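(* For all $m,t\in\mathbb{N}$: $R_t(m,m)=0$, $R_t(m-1,m)=1$, and $R_t(m-2,m)=\min\{t,m\}+1$.
   Context: For a $t\times n$ matrix $\mathbf{v}$ over $\mathbb{F}_2$ with rows $\overline{v}_1,\dots,\overline{v}_t$, $\mathrm{wt}^{(t)}(\mathbf{v})=\left|\bigcup_{i} \mathrm{supp}(\overline{v}_i)\right|$ and $d^{(t)}(\mathbf{u},\mathbf{v})=\mathrm{wt}^{(t)}(\mathbf{u}-\mathbf{v})$. For a linear code $C\subseteq\mathbb{F}_2^n$, $C^t$ is the set of $t\times n$ matrices all of whose rows lie in $C$, and $R_t(C)$ is the smallest integer $\rho$ such that for every $\mathbf{v}\in\mathbb{F}_2^{t\times n}$ some $\mathbf{c}\in C^t$ has $d^{(t)}(\mathbf{v},\mathbf{c})\le\rho$. Reed–Muller codes $\mathrm{RM}(r,m)\subseteq\mathbb{F}_2^{2^m}$: $\mathrm{RM}(0,m)=\{\overline{0},\overline{1}\}$, $\mathrm{RM}(m,m)=\mathbb{F}_2^{2^m}$, and for $1\leq r\leq m-1$, $\mathrm{RM}(r,m)=\{(\overline{u},\overline{u}+\overline{v}) : \overline{u}\in \mathrm{RM}(r,m-1),\ \overline{v}\in\mathrm{RM}(r-1,m-1)\}$. (In particular $\mathrm{RM}(m-1,m)$ is the even-weight code of length $2^m$ and $\mathrm{RM}(m-2,m)$ is the extended Hamming code of length $2^m$; for $m=1$, $\mathrm{RM}(m-2,m)$ is interpreted as $\{\overline{0}\}$.) $R_t(r,m)=R_t(\mathrm{RM}(r,m))$.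 *)

theory Defs
  imports Main
begin

text \<open>Vectors of F_2^n are boolean lists of length n (True = 1); addition is XOR.\<close>

definition vadd :: "bool list \<Rightarrow> bool list \<Rightarrow> bool list" where
  "vadd u v = map2 (\<noteq>) u v"

definition supp :: "bool list \<Rightarrow> nat set" where
  "supp v = {i. i < length v \<and> v ! i}"

definition is_mat :: "nat \<Rightarrow> nat \<Rightarrow> bool list list \<Rightarrow> bool" where
  "is_mat t n M \<longleftrightarrow> length M = t \<and> (\<forall>v\<in>set M. length v = n)"

definition wt_t :: "bool list list \<Rightarrow> nat" where
  "wt_t M = card (\<Union>v\<in>set M. supp v)"

definition dist_t :: "bool list list \<Rightarrow> bool list list \<Rightarrow> nat" where
  "dist_t U V = wt_t (map2 vadd U V)"

definition code_pow :: "nat \<Rightarrow> bool list set \<Rightarrow> bool list list set" where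
  "code_pow t C = {M. length M = t \<and> set M \<subseteq> C}"

definition cov_rad :: "nat \<Rightarrow> nat \<Rightarrow> bool list set \<Rightarrow> nat" where
  "cov_rad t n C = (LEAST \<rho>. \<forall>V. is_mat t n V \<longrightarrow> (\<exists>c\<in>code_pow t C. dist_t V c \<le> \<rho>))"

text \<open>Reed--Muller codes RM(r,m) of length 2^m; for r < 0 the code is {0}
  (this covers RM(m-2,m) for m = 1 as in the paper).\<close>

fun RM :: "int \<Rightarrow> nat \<Rightarrow> bool list set" where
  "RM r 0 = (if r < 0 then {[False]} else {[False], [True]})"
| "RM r (Suc k) =
     (if r < 0 then {replicate (2 ^ Suc k) False}
      else if r = 0 then {replicate (2 ^ Suc k) False, replicate (2 ^ Suc k) True}
      else if r \<ge> int (Suc k) then {v. length v = 2 ^ Suc k}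
      else {u @ vadd u v | u v. u \<in> RM r k \<and> v \<in> RM (r - 1) k})"

definition R_t :: "nat \<Rightarrow> int \<Rightarrow> nat \<Rightarrow> nat" where
  "R_t t r m = cov_rad t (2 ^ m) (RM r m)"

end

(* RM(m,m) is the whole space. RM(m-1,m) is the even-weight code: every row is corrected
   by flipping at most the common position 0, while a row of odd weight needs one flip.
   Through the recursion (u | u+v), RM(m-2,m) is the extended Hamming code of length 2^m,
   whose checks are the overall parity and the bits of the positions. A row is corrected by
   flipping the position named by its syndrome, or the powers 2^k for its nonzero syndrome
   bits, and then possibly position 0; this gives at most t+1, respectively m+1, columns.
   Conversely, for the rows with support {0, 2^j}, j < min t m, the parity checks of any
   error pattern form a unitriangular system over F_2, which needs min t m + 1 positions. *)
theory Submission
  imports Defs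
begin

lemma length_vadd [simp]: "length (vadd u v) = min (length u) (length v)"
  by (simp add: vadd_def)

lemma vadd_vadd_cancel: "length u = length v \<Longrightarrow> vadd u (vadd u v) = v"
  by (rule nth_equalityI) (auto simp: vadd_def)

lemma finite_supp [simp]: "finite (supp v)"
  by (simp add: supp_def)

lemma supp_subset_lessThan: "supp v \<subseteq> {..<length v}"
  by (auto simp: supp_def)

lemma supp_vadd: "length u = length v \<Longrightarrow> supp (vadd u v) = sym_diff (supp u) (supp v)"
  by (auto simp: supp_def vadd_def)

lemma supp_append: "supp (u @ w) = supp u \<union> (\<lambda>i. i + length u) ` supp w"
proof -
  have "x \<in> (\<lambda>i. i + length u) ` supp w" if "x \<in> supp (u @ w)" "x \<notin> supp u" for x
    using that by (intro image_eqI[of _ _ "x - length u"]) (auto simp: supp_def nth_append)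
  then show ?thesis
    by (auto simp: supp_def nth_append)
qed

definition vec_of_set :: "nat \<Rightarrow> nat set \<Rightarrow> bool list" where
  "vec_of_set n S = map (\<lambda>i. i \<in> S) [0..<n]"

lemma length_vec_of_set [simp]: "length (vec_of_set n S) = n"
  by (simp add: vec_of_set_def)

lemma supp_vec_of_set: "supp (vec_of_set n S) = S \<inter> {..<n}"
  by (auto simp: vec_of_set_def supp_def)

lemma odd_card_sym_diff:
  assumes "finite A" "finite B"
  shows "odd (card (sym_diff A B)) \<longleftrightarrow> odd (card A) \<noteq> odd (card B)"
proof -
  have "card (sym_diff A B) = card (A - B) + card (B - A)"
    using assms by (intro card_Un_disjoint) auto
  moreover have "card A = card (A \<inter> B) + card (A - B)" "card B = card (A \<inter> B) + card (B - A)"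
    using assms card_Int_Diff[of A B] card_Int_Diff[of B A] by (simp_all add: Int_commute)
  ultimately show ?thesis
    by presburger
qed

definition parity_check :: "(nat \<Rightarrow> bool) \<Rightarrow> bool list \<Rightarrow> bool" where
  "parity_check P v \<longleftrightarrow> odd (card {i \<in> supp v. P i})"

lemma parity_check_vadd:
  "length u = length v \<Longrightarrow> parity_check P (vadd u v) \<longleftrightarrow> parity_check P u \<noteq> parity_check P v"
proof -
  assume "length u = length v"
  then have "{i \<in> supp (vadd u v). P i} = sym_diff {i \<in> supp u. P i} {i \<in> supp v. P i}"
    by (auto simp: supp_vadd)
  then show ?thesis
    unfolding parity_check_def by (simp add: odd_card_sym_diff)
qed

lemma parity_check_append:
  "parity_check P (u @ w) \<longleftrightarrow> parity_check P u \<noteq> parity_check (\<lambda>i. P (i + length u)) w"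
proof -
  let ?shift = "\<lambda>i. i + length u"
  have "{i \<in> supp (u @ w). P i} = {i \<in> supp u. P i} \<union> ?shift ` {i \<in> supp w. P (?shift i)}"
    by (auto simp: supp_append)
  moreover have "{i \<in> supp u. P i} \<inter> ?shift ` {i \<in> supp w. P (?shift i)} = {}"
    using supp_subset_lessThan[of u] by auto
  moreover have "card (?shift ` {i \<in> supp w. P (?shift i)}) = card {i \<in> supp w. P (?shift i)}"
    by (rule card_image) (simp add: inj_on_def)
  ultimately show ?thesis
    unfolding parity_check_def by (simp add: card_Un_disjoint)
qed

lemma parity_check_cong:
  assumes "\<And>i. i < length v \<Longrightarrow> P i = Q i"
  shows "parity_check P v = parity_check Q v"
proof -
  have "{i \<in> supp v. P i} = {i \<in> supp v. Q i}"
    using assms supp_subset_lessThan[of v] by auto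
  then show ?thesis
    by (simp add: parity_check_def)
qed

lemma parity_check_xor:
  "parity_check (\<lambda>i. P i \<noteq> Q i) v \<longleftrightarrow> parity_check P v \<noteq> parity_check Q v"
proof -
  have "{i \<in> supp v. P i \<noteq> Q i} = sym_diff {i \<in> supp v. P i} {i \<in> supp v. Q i}"
    by auto
  then show ?thesis
    unfolding parity_check_def by (simp add: odd_card_sym_diff)
qed

lemma parity_check_False [simp]: "\<not> parity_check (\<lambda>_. False) v"
  by (simp add: parity_check_def)

lemma parity_check_vec_of_set:
  "S \<subseteq> {..<n} \<Longrightarrow> parity_check P (vec_of_set n S) \<longleftrightarrow> odd (card {i \<in> S. P i})"
  by (simp add: parity_check_def supp_vec_of_set Int_absorb2)

lemma not_bit_ge: "(i::nat) < 2 ^ m \<Longrightarrow> m \<le> k \<Longrightarrow> \<not> bit i k"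
  by (metis bit_take_bit_iff not_le take_bit_nat_eq_self_iff)

lemma bit_add_power:
  assumes "(i::nat) < 2 ^ n"
  shows "bit (i + 2 ^ n) k \<longleftrightarrow> (k = n) \<noteq> bit i k"
proof -
  have "bit (i + 2 ^ n) k \<longleftrightarrow> bit i k \<or> bit ((2::nat) ^ n) k"
    by (rule bit_disjunctive_add_iff) (use not_bit_ge[OF assms] in \<open>auto simp: bit_exp_iff\<close>)
  then show ?thesis
    using not_bit_ge[OF assms] by (auto simp: bit_exp_iff)
qed

lemma parity_check_high_bit: "length v = 2 ^ m \<Longrightarrow> m \<le> k \<Longrightarrow> \<not> parity_check (\<lambda>i. bit i k) v"
  by (subst parity_check_cong[where Q = "\<lambda>_. False"]) (auto simp: not_bit_ge parity_check_def)

definition even_weight_code :: "nat \<Rightarrow> bool list set" where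
  "even_weight_code n = {v. length v = n \<and> \<not> parity_check (\<lambda>_. True) v}"

definition ext_hamming_code :: "nat \<Rightarrow> bool list set" where
  "ext_hamming_code m =
     {v. length v = 2 ^ m \<and> \<not> parity_check (\<lambda>_. True) v \<and> (\<forall>k. \<not> parity_check (\<lambda>i. bit i k) v)}"

lemma exists_plotkin_split:
  assumes "length w = n + n"
  obtains u v where "length u = n" "length v = n" "w = u @ vadd u v"
proof
  show "length (take n w) = n" "length (vadd (take n w) (drop n w)) = n"
    using assms by simp_all
  show "w = take n w @ vadd (take n w) (vadd (take n w) (drop n w))"
    using assms by (simp add: vadd_vadd_cancel)
qed

lemma plotkin_eqI:
  assumes "\<And>w. w \<in> S \<Longrightarrow> length w = n + n"
    and "\<And>u. u \<in> A \<Longrightarrow> length u = n" and "\<And>v. v \<in> B \<Longrightarrow> length v = n"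
    and "\<And>u v. length u = n \<Longrightarrow> length v = n \<Longrightarrow> u @ vadd u v \<in> S \<longleftrightarrow> u \<in> A \<and> v \<in> B"
  shows "{u @ vadd u v | u v. u \<in> A \<and> v \<in> B} = S"
proof (intro set_eqI iffI)
  fix w assume "w \<in> S"
  then obtain u v where "length u = n" "length v = n" "w = u @ vadd u v"
    using assms(1) exists_plotkin_split by metis
  with \<open>w \<in> S\<close> assms(4) show "w \<in> {u @ vadd u v | u v. u \<in> A \<and> v \<in> B}"
    by blast
qed (use assms(2-4) in fastforce)

lemma append_vadd_in_even_weight_code:
  "length u = n \<Longrightarrow> length v = n \<Longrightarrow> u @ vadd u v \<in> even_weight_code (n + n) \<longleftrightarrow> v \<in> even_weight_code n"
  by (auto simp: even_weight_code_def parity_check_append parity_check_vadd)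

lemma append_vadd_in_ext_hamming_code:
  assumes "length u = 2 ^ n" "length v = 2 ^ n"
  shows "u @ vadd u v \<in> ext_hamming_code (Suc n) \<longleftrightarrow>
    u \<in> even_weight_code (2 ^ n) \<and> v \<in> ext_hamming_code n"
proof -
  let ?w = "vadd u v"
  have "length ?w = 2 ^ n"
    using assms by simp
  then have "parity_check (\<lambda>i. bit (i + 2 ^ n) k) ?w \<longleftrightarrow> parity_check (\<lambda>i. (k = n) \<noteq> bit i k) ?w" for k
    by (intro parity_check_cong) (simp add: bit_add_power)
  then have shifted_bit: "parity_check (\<lambda>i. bit (i + 2 ^ n) k) ?w \<longleftrightarrow>
      (k = n \<and> parity_check (\<lambda>_. True) ?w) \<noteq> parity_check (\<lambda>i. bit i k) ?w" for k
    by (simp only: parity_check_xor) (cases "k = n"; simp)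
  have total: "parity_check (\<lambda>_. True) (u @ ?w) \<longleftrightarrow> parity_check (\<lambda>_. True) v"
    using assms by (auto simp: parity_check_append parity_check_vadd)
  have bits: "parity_check (\<lambda>i. bit i k) (u @ ?w) \<longleftrightarrow>
      (k = n \<and> parity_check (\<lambda>_. True) ?w) \<noteq> parity_check (\<lambda>i. bit i k) v" for k
    using assms by (simp add: parity_check_append parity_check_vadd shifted_bit) blast
  have "\<not> parity_check (\<lambda>i. bit i n) v"
    using assms(2) by (simp add: parity_check_high_bit)
  then show ?thesis
    using assms by (auto simp: ext_hamming_code_def even_weight_code_def total bits parity_check_vadd)
qed

lemma even_weight_code_double:
  "{u @ vadd u v | u v. u \<in> {u. length u = n} \<and> v \<in> even_weight_code n} = even_weight_code (n + n)"
proof (rule plotkin_eqI)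
  show "u @ vadd u v \<in> even_weight_code (n + n) \<longleftrightarrow> u \<in> {u. length u = n} \<and> v \<in> even_weight_code n"
    if "length u = n" "length v = n" for u v
    using that by (simp add: append_vadd_in_even_weight_code)
qed (simp_all add: even_weight_code_def)

lemma ext_hamming_code_Suc:
  "{u @ vadd u v | u v. u \<in> even_weight_code (2 ^ n) \<and> v \<in> ext_hamming_code n} = ext_hamming_code (Suc n)"
proof (rule plotkin_eqI)
  show "u @ vadd u v \<in> ext_hamming_code (Suc n) \<longleftrightarrow>
      u \<in> even_weight_code (2 ^ n) \<and> v \<in> ext_hamming_code n"
    if "length u = 2 ^ n" "length v = 2 ^ n" for u v
    using that by (rule append_vadd_in_ext_hamming_code)
qed (simp_all add: even_weight_code_def ext_hamming_code_def)

lemma supp_singleton: "supp [a] = (if a then {0} else {})"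
  by (auto simp: supp_def)

lemma bool_list_length_Suc_0_iff: "length v = Suc 0 \<longleftrightarrow> v = [False] \<or> v = [True]"
  by (auto simp: length_Suc_conv)

lemma even_weight_code_1: "even_weight_code 1 = {[False]}"
  by (auto simp: even_weight_code_def parity_check_def supp_singleton bool_list_length_Suc_0_iff)

lemma ext_hamming_code_0: "ext_hamming_code 0 = {[False]}"
  by (auto simp: ext_hamming_code_def parity_check_def supp_singleton bool_list_length_Suc_0_iff)

lemma even_weight_code_2: "even_weight_code 2 = {[False, False], [True, True]}"
proof -
  have "even_weight_code 2 = {u @ vadd u v | u v. u \<in> {u. length u = 1} \<and> v \<in> even_weight_code 1}"
    using even_weight_code_double[of 1] by (simp add: numeral_2_eq_2)
  also have "\<dots> = {[False, False], [True, True]}"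
    unfolding even_weight_code_1 by (auto simp: bool_list_length_Suc_0_iff vadd_def conj_disj_distribL ex_disj_distrib)
  finally show ?thesis .
qed

lemma ext_hamming_code_1: "ext_hamming_code 1 = {[False, False]}"
proof -
  have "ext_hamming_code 1 = {u @ vadd u v | u v. u \<in> even_weight_code 1 \<and> v \<in> ext_hamming_code 0}"
    using ext_hamming_code_Suc[of 0] by simp
  also have "\<dots> = {[False, False]}"
    unfolding even_weight_code_1 ext_hamming_code_0 by (auto simp: vadd_def)
  finally show ?thesis .
qed

lemma ext_hamming_code_2: "ext_hamming_code 2 = {replicate 4 False, replicate 4 True}"
proof -
  have "ext_hamming_code 2 = {u @ vadd u v | u v. u \<in> even_weight_code 2 \<and> v \<in> ext_hamming_code 1}"
    using ext_hamming_code_Suc[of 1] by (simp add: numeral_2_eq_2)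
  also have "\<dots> = {replicate 4 False, replicate 4 True}"
    unfolding even_weight_code_2 ext_hamming_code_1 by (auto simp: vadd_def numeral_eq_Suc conj_disj_distribL ex_disj_distrib)
  finally show ?thesis .
qed

lemma RM_top: "1 \<le> m \<Longrightarrow> RM (int m) m = {v. length v = 2 ^ m}"
  by (cases m) auto

lemma RM_even_weight: "1 \<le> m \<Longrightarrow> RM (int m - 1) m = even_weight_code (2 ^ m)"
proof (induction m)
  case (Suc k)
  show ?case
  proof (cases "k = 0")
    case True
    then show ?thesis
      using even_weight_code_2 by (simp add: numeral_eq_Suc)
  next
    case False
    then have "RM (int (Suc k) - 1) (Suc k) =
        {u @ vadd u v | u v. u \<in> RM (int k) k \<and> v \<in> RM (int k - 1) k}"
      by simp
    then show ?thesis
      using False Suc.IH even_weight_code_double[of "2 ^ k"] by (simp add: RM_top mult_2)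
  qed
qed simp

lemma RM_ext_hamming: "1 \<le> m \<Longrightarrow> RM (int m - 2) m = ext_hamming_code m"
proof (induction m)
  case (Suc k)
  consider "k = 0" | "k = 1" | "k \<ge> 2"
    by linarith
  then show ?case
  proof cases
    case 1
    then show ?thesis
      using ext_hamming_code_1 by (simp add: numeral_eq_Suc)
  next
    case 2
    then show ?thesis
      using ext_hamming_code_2 by (simp add: numeral_eq_Suc)
  next
    case 3
    then have "RM (int (Suc k) - 2) (Suc k) =
        {u @ vadd u v | u v. u \<in> RM (int k - 1) k \<and> v \<in> RM (int k - 2) k}"
      by (simp add: algebra_simps)
    then show ?thesis
      using 3 Suc.IH by (simp add: RM_even_weight ext_hamming_code_Suc)
  qed
qed simp

lemma cov_rad_eqI:
  assumes "\<And>V. is_mat t n V \<Longrightarrow> \<exists>c\<in>code_pow t C. dist_t V c \<le> \<rho>"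
    and "is_mat t n V\<^sub>0" and "\<And>c. c \<in> code_pow t C \<Longrightarrow> \<rho> \<le> dist_t V\<^sub>0 c"
  shows "cov_rad t n C = \<rho>"
  unfolding cov_rad_def
proof (rule Least_equality)
  fix \<rho>' assume "\<forall>V. is_mat t n V \<longrightarrow> (\<exists>c\<in>code_pow t C. dist_t V c \<le> \<rho>')"
  then obtain c where "c \<in> code_pow t C" "dist_t V\<^sub>0 c \<le> \<rho>'"
    using assms(2) by blast
  then show "\<rho> \<le> \<rho>'"
    using assms(3) by force
qed (use assms(1) in blast)

lemma dist_t_conv_nth:
  assumes "length U = length V"
  shows "dist_t U V = card (\<Union>j<length U. supp (vadd (U ! j) (V ! j)))"
proof -
  have "map2 vadd U V = map (\<lambda>j. vadd (U ! j) (V ! j)) [0..<length U]"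
    using assms by (intro nth_equalityI) auto
  then show ?thesis
    by (simp add: dist_t_def wt_t_def atLeast0LessThan)
qed

lemma exists_code_pow_dist_le:
  assumes V: "is_mat t n V" and "finite X"
    and correctable: "\<And>v. v \<in> set V \<Longrightarrow> \<exists>F\<subseteq>X. vadd v (vec_of_set n F) \<in> C"
  shows "\<exists>c\<in>code_pow t C. dist_t V c \<le> card X"
proof -
  obtain F where F: "\<And>v. v \<in> set V \<Longrightarrow> F v \<subseteq> X \<and> vadd v (vec_of_set n (F v)) \<in> C"
    using correctable by metis
  define c where "c = map (\<lambda>v. vadd v (vec_of_set n (F v))) V"
  have c: "c \<in> code_pow t C"
    using V F by (auto simp: c_def code_pow_def is_mat_def)
  have "map2 vadd V c = map (\<lambda>v. vec_of_set n (F v)) V"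
    using V by (simp add: c_def zip_map2 zip_same_conv_map is_mat_def vadd_vadd_cancel)
  then have "dist_t V c = card (\<Union>v\<in>set V. F v \<inter> {..<n})"
    by (simp add: dist_t_def wt_t_def supp_vec_of_set)
  also have "\<dots> \<le> card X"
    using F \<open>finite X\<close> by (intro card_mono) auto
  finally show ?thesis
    using c by blast
qed

text \<open>The parities of the checks Q k on the sets E j form a unitriangular matrix over F_2,
  so the E j are independent in F_2^U; the induction eliminates a point of the last set.\<close>

lemma card_ge_if_parity_triangular:
  assumes "finite U" and "\<And>j. j < n \<Longrightarrow> E j \<subseteq> U"
    and "\<And>j k. j < n \<Longrightarrow> k \<le> j \<Longrightarrow> odd (card {i \<in> E j. Q k i}) \<longleftrightarrow> j = k"
  shows "n \<le> card U"
  using assms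
proof (induction n arbitrary: U E)
  case (Suc n)
  have "odd (card {i \<in> E n. Q n i})"
    using Suc.prems(3) by blast
  then obtain x where x: "x \<in> E n"
    by fastforce
  define E' where "E' j = (if x \<in> E j then sym_diff (E j) (E n) else E j)" for j
  have "n \<le> card (U - {x})"
  proof (rule Suc.IH)
    show "E' j \<subseteq> U - {x}" if "j < n" for j
      using that x Suc.prems(2)[of j] Suc.prems(2)[of n] by (auto simp: E'_def)
    show "odd (card {i \<in> E' j. Q k i}) \<longleftrightarrow> j = k" if "j < n" "k \<le> j" for j k
    proof -
      have "finite (E j)" "finite (E n)"
        using Suc.prems(1,2) \<open>j < n\<close> by (meson finite_subset less_SucI lessI)+
      moreover have "{i \<in> sym_diff (E j) (E n). Q k i} = sym_diff {i \<in> E j. Q k i} {i \<in> E n. Q k i}"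
        by auto
      moreover have "even (card {i \<in> E n. Q k i})"
        using Suc.prems(3)[of n k] that by simp
      ultimately show ?thesis
        using Suc.prems(3)[of j k] that by (simp add: E'_def odd_card_sym_diff)
    qed
  qed (use Suc.prems(1) in simp)
  moreover have "x \<in> U"
    using x Suc.prems(2) by blast
  ultimately have "n \<le> card U - 1" "0 < card U"
    using Suc.prems(1) by (auto simp: card_Diff_singleton card_gt_0_iff)
  then show ?case
    by linarith
qed simp

lemma cov_rad_full_space: "cov_rad t n {v. length v = n} = 0"
proof (rule cov_rad_eqI)
  show "\<exists>c\<in>code_pow t {v. length v = n}. dist_t V c \<le> 0" if "is_mat t n V" for V
    using exists_code_pow_dist_le[OF that, of "{}"] that by (auto simp: is_mat_def)
  show "is_mat t n (replicate t (replicate n False))"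
    by (simp add: is_mat_def)
qed simp

lemma cov_rad_even_weight_code:
  assumes "0 < n" "0 < t"
  shows "cov_rad t n (even_weight_code n) = 1"
proof (rule cov_rad_eqI)
  show "\<exists>c\<in>code_pow t (even_weight_code n). dist_t V c \<le> 1" if V: "is_mat t n V" for V
  proof -
    have correctable: "\<exists>F\<subseteq>{0}. vadd v (vec_of_set n F) \<in> even_weight_code n" if "v \<in> set V" for v
    proof -
      let ?F = "if parity_check (\<lambda>_. True) v then {0} else {}"
      have "length v = n"
        using V that by (simp add: is_mat_def)
      then have "vadd v (vec_of_set n ?F) \<in> even_weight_code n"
        using assms by (simp add: even_weight_code_def parity_check_vadd parity_check_vec_of_set)
      then show ?thesis
        by (intro exI[of _ ?F]) simp
    qed
    have "\<exists>c\<in>code_pow t (even_weight_code n). dist_t V c \<le> card {0::nat}"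
      by (rule exists_code_pow_dist_le[OF V _ correctable]) simp_all
    then show ?thesis
      by simp
  qed
  define V\<^sub>0 where "V\<^sub>0 = map (\<lambda>j. vec_of_set n (if j = 0 then {0} else {})) [0..<t]"
  show "is_mat t n V\<^sub>0"
    by (auto simp: V\<^sub>0_def is_mat_def)
  show "1 \<le> dist_t V\<^sub>0 c" if c: "c \<in> code_pow t (even_weight_code n)" for c
  proof -
    have "c ! 0 \<in> even_weight_code n"
      using c assms by (auto simp: code_pow_def)
    then have "parity_check (\<lambda>_. True) (vadd (V\<^sub>0 ! 0) (c ! 0))"
      using assms by (simp add: V\<^sub>0_def even_weight_code_def parity_check_vadd parity_check_vec_of_set)
    then have "supp (vadd (V\<^sub>0 ! 0) (c ! 0)) \<noteq> {}"
      by (auto simp: parity_check_def)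
    then show ?thesis
      using c assms by (auto simp: dist_t_conv_nth V\<^sub>0_def code_pow_def card_gt_0_iff Suc_le_eq)
  qed
qed

text \<open>Flipping B fixes the bit checks; flipping position 0, which has no bits, then fixes
  the overall parity.\<close>

lemma ext_hamming_code_correctable:
  assumes v: "length v = 2 ^ m" and B: "B \<subseteq> {..<2 ^ m}"
    and bits_B: "\<And>k. k < m \<Longrightarrow> odd (card {i \<in> B. bit i k}) \<longleftrightarrow> parity_check (\<lambda>i. bit i k) v"
  shows "\<exists>F\<subseteq>insert 0 B. vadd v (vec_of_set (2 ^ m) F) \<in> ext_hamming_code m"
proof -
  define F where "F = (if odd (card B) = parity_check (\<lambda>_. True) v then B else sym_diff B {0})"
  have "finite B"
    using B finite_subset by blast
  then have weight_F: "odd (card F) \<longleftrightarrow> parity_check (\<lambda>_. True) v"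
    by (auto simp: F_def odd_card_sym_diff)
  have F: "F \<subseteq> insert 0 B" "F \<subseteq> {..<2 ^ m}"
    using B by (auto simp: F_def)
  have bits_F: "odd (card {i \<in> F. bit i k}) \<longleftrightarrow> parity_check (\<lambda>i. bit i k) v" for k
  proof (cases "k < m")
    case True
    have "{i \<in> F. bit i k} = {i \<in> B. bit i k}"
      by (auto simp: F_def intro!: gr0I)
    with True bits_B show ?thesis
      by simp
  next
    case False
    have "\<not> bit i k" if "i \<in> F" for i
      using not_bit_ge[of i m k] F(2) that False by auto
    then have "{i \<in> F. bit i k} = {}"
      by blast
    then have "card {i \<in> F. bit i k} = 0"
      by (simp only: card.empty)
    with False v show ?thesis
      by (simp add: parity_check_high_bit)
  qed
  have "vadd v (vec_of_set (2 ^ m) F) \<in> ext_hamming_code m"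
    using v F(2) weight_F bits_F
    by (simp add: ext_hamming_code_def parity_check_vadd parity_check_vec_of_set)
  with F(1) show ?thesis
    by blast
qed

lemma ext_hamming_code_cover:
  fixes X :: "nat set"
  assumes V: "is_mat t (2 ^ m) V" and X: "finite X" "X \<subseteq> {..<2 ^ m}"
    and syndromes: "\<And>v. v \<in> set V \<Longrightarrow>
      \<exists>B\<subseteq>X. \<forall>k<m. odd (card {i \<in> B. bit i k}) \<longleftrightarrow> parity_check (\<lambda>i. bit i k) v"
  shows "\<exists>c\<in>code_pow t (ext_hamming_code m). dist_t V c \<le> card X + 1"
proof -
  have correctable: "\<exists>F\<subseteq>insert 0 X. vadd v (vec_of_set (2 ^ m) F) \<in> ext_hamming_code m" if v: "v \<in> set V" for v
  proof -
    obtain B where B: "B \<subseteq> X"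
      and bits: "\<forall>k<m. odd (card {i \<in> B. bit i k}) \<longleftrightarrow> parity_check (\<lambda>i. bit i k) v"
      using syndromes[OF v] by blast
    have "\<exists>F\<subseteq>insert 0 B. vadd v (vec_of_set (2 ^ m) F) \<in> ext_hamming_code m"
      by (rule ext_hamming_code_correctable) (use V v B X(2) bits in \<open>auto simp: is_mat_def\<close>)
    with B show ?thesis
      by blast
  qed
  have "\<exists>c\<in>code_pow t (ext_hamming_code m). dist_t V c \<le> card (insert 0 X)"
    by (rule exists_code_pow_dist_le[OF V _ correctable]) (simp_all add: X(1))
  moreover have "card (insert 0 X) \<le> card X + 1"
    using X(1) by (simp add: card_insert_if)
  ultimately show ?thesis
    by (meson order_trans)
qed

text \<open>For a word with a single error, this is the position of the error.\<close>

definition hamming_syndrome :: "nat \<Rightarrow> bool list \<Rightarrow> nat" where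
  "hamming_syndrome m v = horner_sum of_bool 2 (map (\<lambda>k. parity_check (\<lambda>i. bit i k) v) [0..<m])"

lemma bit_hamming_syndrome: "bit (hamming_syndrome m v) k \<longleftrightarrow> k < m \<and> parity_check (\<lambda>i. bit i k) v"
  by (auto simp: hamming_syndrome_def bit_horner_sum_bit_iff)

lemma hamming_syndrome_less: "hamming_syndrome m v < 2 ^ m"
  using horner_sum_of_bool_2_less[of "map (\<lambda>k. parity_check (\<lambda>i. bit i k) v) [0..<m]"]
  by (simp add: hamming_syndrome_def)

lemma ext_hamming_code_cover_by_syndromes:
  assumes "is_mat t (2 ^ m) V"
  shows "\<exists>c\<in>code_pow t (ext_hamming_code m). dist_t V c \<le> t + 1"
proof -
  let ?X = "hamming_syndrome m ` set V"
  have syndromes: "\<exists>B\<subseteq>?X. \<forall>k<m. odd (card {i \<in> B. bit i k}) \<longleftrightarrow> parity_check (\<lambda>i. bit i k) v"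
    if "v \<in> set V" for v
  proof -
    have "{i \<in> {hamming_syndrome m v}. bit i k} = (if bit (hamming_syndrome m v) k then {hamming_syndrome m v} else {})" for k
      by auto
    then show ?thesis
      using that by (intro exI[of _ "{hamming_syndrome m v}"]) (auto simp: bit_hamming_syndrome)
  qed
  have "\<exists>c\<in>code_pow t (ext_hamming_code m). dist_t V c \<le> card ?X + 1"
    by (rule ext_hamming_code_cover[OF assms _ _ syndromes]) (auto simp: hamming_syndrome_less)
  moreover have "card ?X \<le> t"
    using assms card_image_le[of "set V" "hamming_syndrome m"] card_length[of V]
    by (simp add: is_mat_def)
  ultimately show ?thesis
    by (meson add_le_mono1 order_trans)
qed

lemma ext_hamming_code_cover_by_powers:
  assumes "is_mat t (2 ^ m) V"
  shows "\<exists>c\<in>code_pow t (ext_hamming_code m). dist_t V c \<le> m + 1"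
proof -
  let ?X = "(\<lambda>k. 2 ^ k) ` {..<m} :: nat set"
  have syndromes: "\<exists>B\<subseteq>?X. \<forall>k<m. odd (card {i \<in> B. bit i k}) \<longleftrightarrow> parity_check (\<lambda>i. bit i k) v" for v
  proof -
    let ?B = "(\<lambda>k. 2 ^ k) ` {k. k < m \<and> parity_check (\<lambda>i. bit i k) v} :: nat set"
    have "{i \<in> ?B. bit i k} = (if k < m \<and> parity_check (\<lambda>i. bit i k) v then {2 ^ k} else {})" for k
      by (auto simp: bit_exp_iff)
    then show ?thesis
      by (intro exI[of _ ?B]) auto
  qed
  have "\<exists>c\<in>code_pow t (ext_hamming_code m). dist_t V c \<le> card ?X + 1"
    by (rule ext_hamming_code_cover[OF assms _ _ syndromes]) auto
  moreover have "card ?X \<le> m"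
    using card_image_le[of "{..<m}" "\<lambda>k. (2::nat) ^ k"] by simp
  ultimately show ?thesis
    by (meson add_le_mono1 order_trans)
qed

lemma ext_hamming_code_dist_ge:
  assumes "0 < d" "d \<le> t" "d \<le> m" and c: "c \<in> code_pow t (ext_hamming_code m)"
  shows "d + 1 \<le> dist_t (map (\<lambda>j. vec_of_set (2 ^ m) (if j < d then {0, 2 ^ j} else {})) [0..<t]) c"
    (is "_ \<le> dist_t ?V c")
proof -
  define E where "E j = supp (vadd (?V ! j) (c ! j))" for j
  define U where "U = (\<Union>j<t. E j)"
  have "length c = t"
    using c by (simp add: code_pow_def)
  then have dist: "dist_t ?V c = card U"
    by (simp add: dist_t_conv_nth U_def E_def)
  have parity_E: "odd (card {i \<in> E j. Q i}) \<longleftrightarrow> odd (card {i \<in> {0, 2 ^ j}. Q i})"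
    if "j < d" and check: "\<And>w. w \<in> ext_hamming_code m \<Longrightarrow> \<not> parity_check Q w" for j Q
  proof -
    have "c ! j \<in> ext_hamming_code m"
      using c \<open>length c = t\<close> \<open>j < d\<close> assms(2) by (auto simp: code_pow_def)
    then have "length (c ! j) = 2 ^ m" "\<not> parity_check Q (c ! j)"
      using check by (auto simp: ext_hamming_code_def)
    moreover have "{0, 2 ^ j} \<subseteq> {..<2 ^ m :: nat}"
      using \<open>j < d\<close> assms(3) by auto
    ultimately show ?thesis
      using \<open>j < d\<close> assms(2)
      by (simp add: E_def parity_check_vadd parity_check_vec_of_set flip: parity_check_def)
  qed
  have checks: "\<not> parity_check (\<lambda>_. True) w" "\<not> parity_check (\<lambda>i. bit i k) w"
    if "w \<in> ext_hamming_code m" for w k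
    using that by (simp_all add: ext_hamming_code_def)
  have even_E: "even (card (E j))" if "j < d" for j
  proof -
    have "odd (card (E j)) \<longleftrightarrow> odd (card {0, 2 ^ j :: nat})"
      using parity_E[OF that checks(1)] by (simp only: simp_thms Collect_mem_eq)
    then show ?thesis
      by simp
  qed
  have bits_E: "odd (card {i \<in> E j. bit i k}) \<longleftrightarrow> j = k" if "j < d" for j k
  proof -
    have "{i \<in> {0, 2 ^ j}. bit i k} = (if j = k then {2 ^ j :: nat} else {})"
      by (auto simp: bit_exp_iff intro!: gr0I)
    then show ?thesis
      using parity_E[OF that checks(2)] by auto
  qed
  obtain x where x: "x \<in> E 0"
    using bits_E[OF \<open>0 < d\<close>, of 0] by fastforce
  have "Suc d \<le> card U"
  proof (rule card_ge_if_parity_triangular[where E = "case_nat {x} E" and Q = "case_nat (\<lambda>_. True) (\<lambda>k i. bit i k)"])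
    show "finite U"
      by (simp add: U_def E_def)
    show "case_nat {x} E j \<subseteq> U" if "j < Suc d" for j
      using that x assms(1,2) by (cases j) (auto simp: U_def intro!: bexI[where A = "{..<t}"])
    show "odd (card {i \<in> case_nat {x} E j. case_nat (\<lambda>_. True) (\<lambda>k i. bit i k) k i}) \<longleftrightarrow> j = k"
      if "j < Suc d" "k \<le> j" for j k
      using that even_E bits_E by (cases j; cases k) auto
  qed
  with dist show ?thesis
    by simp
qed

lemma cov_rad_ext_hamming_code:
  assumes "0 < m" "0 < t"
  shows "cov_rad t (2 ^ m) (ext_hamming_code m) = min t m + 1"
proof -
  define V\<^sub>0 where "V\<^sub>0 = map (\<lambda>j. vec_of_set (2 ^ m) (if j < min t m then {0, 2 ^ j} else {})) [0..<t]"
  show ?thesis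
  proof (rule cov_rad_eqI)
    show "\<exists>c\<in>code_pow t (ext_hamming_code m). dist_t V c \<le> min t m + 1" if "is_mat t (2 ^ m) V" for V
      using ext_hamming_code_cover_by_syndromes[OF that] ext_hamming_code_cover_by_powers[OF that]
      by (cases "t \<le> m") (simp_all add: min_def)
    show "is_mat t (2 ^ m) V\<^sub>0"
      by (auto simp: V\<^sub>0_def is_mat_def)
    show "min t m + 1 \<le> dist_t V\<^sub>0 c" if "c \<in> code_pow t (ext_hamming_code m)" for c
      unfolding V\<^sub>0_def using assms by (intro ext_hamming_code_dist_ge[OF _ _ _ that]) simp_all
  qed
qed

theorem proposition13:
  fixes m t :: nat
  assumes "1 \<le> m" and "1 \<le> t"
  shows "R_t t (int m) m = 0 \<and> R_t t (int m - 1) m = 1 \<and> R_t t (int m - 2) m = min t m + 1"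
  using assms
  by (simp add: R_t_def RM_top RM_even_weight RM_ext_hamming cov_rad_full_space
      cov_rad_even_weight_code cov_rad_ext_hamming_code)

end
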